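(* The hyperplane $S_\gamma^\perp$ of $\Sigma$ meets $\Pi$ in a solid $\Pi\cap S_\gamma^\perp$ such that $\Pi\cap S_\gamma^\perp\cap\mathcal Q$ is an elliptic quadric of that solid. Moreover the stabilizer of $S_\gamma$ in $G$ has order $q^2+1$, and $|S_\gamma^G|=q^2(q^2-1)$.
   Context: Let $q$ be an even prime power and $\mathrm{PG}(5,q^2)$ have homogeneous coordinates $(X_1,\dots,X_6)$, points written as column vectors. Let $\Sigma$ be the set of points having a coordinate vector $(\alpha,\alpha^q,\delta_0,\beta,\beta^q,\delta_1)$ with $\alpha,\beta\in\mathbb F_{q^2}$, $\delta_0,\delta_1\in\mathbb F_q$ (a Baer subgeometry $\cong\mathrm{PG}(5,q)$). Let $\Pi=\Sigma\cap\{X_6=0\}$ (a hyperplane of $\Sigma$), $\mathcal Q=\Sigma\cap\{X_6=0,\ X_3^2+X_1X_5+X_2X_4=0\}=\{(\alpha,\alpha^q,\sqrt{\alpha\beta^q+\alpha^q\beta},\beta,\beta^q,0)\}$ (a parabolic quadric $\mathcal Q(4,q)$ of $\Pi$) with nucleus $N=(0,0,1,0,0,0)$. Fix $\omega\in\mathbb F_{q^2}\setminus\mathbb F_q$ with $\omega+\omega^q=1$ and let $h(X,Y)=\omega X_1Y_4^q+\omega^qX_1Y_6^q+\omega^qX_2Y_5^q+\omega X_2Y_6^q+X_3Y_6^q+\omega^qX_4Y_1^q+\omega X_5Y_2^q+\omega X_6Y_1^q+\omega^qX_6Y_2^q+X_6Y_3^q$ (Hermitian form of a Hermitian variety $\mathcal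 H(5,q^2)$ containing $\Sigma$). Restricted to $\Sigma$, $P\perp R\iff h(P,R)=0$ defines a symplectic polarity $\perp$ of $\Sigma$; $\mathcal W(5,q)$ is the associated symplectic polar space (so $N^\perp=\Pi$). For $a,b,c,d\in\mathbb F_{q^2}$ with $ad+bc=1$ let $M_{a,b,c,d}$ be the $6\times6$ matrix with rows $(a^2,0,0,0,c^2,\tfrac{c(a+c\omega^q)}{\omega})$, $(0,a^{2q},0,c^{2q},0,\tfrac{c^q(a^q+c^q\omega)}{\omega^q})$, $(ab,a^qb^q,1,c^qd^q,cd,\tfrac{d(a+c\omega^q)}{\omega}+\tfrac{d^q(a^q+c^q\omega)}{\omega^q}+\tfrac{1}{\omega^{q+1}})$, $(0,b^{2q},0,d^{2q},0,\tfrac{d^q(b^q+d^q\omega)+\omega}{\omega^q})$, $(b^2,0,0,0,d^2,\tfrac{d(b+d\omega^q)+\omega^q}{\omega})$, $(0,0,0,0,0,1)$, and let $G\cong\mathrm{PSL}(2,q^2)$ be the group of projectivities $X\mapsto M_{a,b,c,d}X$; $G$ stabilizes $\Sigma,\Pi,\mathcal Q,N$ and the polarity $\perp$. Fix $\gamma\in\mathbb F_{q^2}$ with $X^2+X+\gamma$ irreducible over $\mathbb F_{q^2}$ and let $S_\gamma=\left(\frac{\gamma}{\omega},\frac{\gamma^q}{\omega^q},\frac{\omega^q\gamma}{\omega}+\frac{\omega\gamma^q}{\omega^q},1,1,1\right)\in\Sigma$; $S_\gamma^G$ is its $G$-orbit. *)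

theory Defs
  imports "HOL-Computational_Algebra.Computational_Algebra"
begin

text \<open>Vectors of PG(5,q^2) are lists of length 6 over a finite field 'a with q^2 elements;
  coordinate X_i is the list entry of index i-1. A projective point is the set of all
  nonzero scalar multiples of a nonzero vector.\<close>

definition subF :: "nat \<Rightarrow> ('a::field) set" where
  "subF q = {x. x ^ q = x}"

definition ptof :: "('a::field) list \<Rightarrow> 'a list set" where
  "ptof v = {map (\<lambda>x. c * x) v | c. c \<noteq> 0}"

definition PG5 :: "('a::field) list set set" where
  "PG5 = {ptof v | v. length v = 6 \<and> v \<noteq> replicate 6 0}"

definition sigvec :: "nat \<Rightarrow> ('a::field) list \<Rightarrow> bool" where
  "sigvec q v \<longleftrightarrow> (\<exists>\<alpha> \<beta> \<delta>0 \<delta>1. \<delta>0 \<in> subF q \<and> \<delta>1 \<in> subF q \<and>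
      v = [\<alpha>, \<alpha> ^ q, \<delta>0, \<beta>, \<beta> ^ q, \<delta>1])"

definition Sigma5 :: "nat \<Rightarrow> ('a::field) list set set" where
  "Sigma5 q = {ptof v | v. sigvec q v \<and> v \<noteq> replicate 6 0}"

definition Pi4 :: "nat \<Rightarrow> ('a::field) list set set" where
  "Pi4 q = {P \<in> Sigma5 q. \<forall>v\<in>P. v ! 5 = 0}"

definition Quad :: "nat \<Rightarrow> ('a::field) list set set" where
  "Quad q = {P \<in> Pi4 q. \<forall>v\<in>P. (v ! 2)^2 + v ! 0 * v ! 4 + v ! 1 * v ! 3 = 0}"

definition hform :: "nat \<Rightarrow> 'a::field \<Rightarrow> 'a list \<Rightarrow> 'a list \<Rightarrow> 'a" where
  "hform q \<omega> X Y =
     \<omega> * X!0 * (Y!3)^q + \<omega>^q * X!0 * (Y!5)^q + \<omega>^q * X!1 * (Y!4)^q + \<omega> * X!1 * (Y!5)^q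
   + X!2 * (Y!5)^q + \<omega>^q * X!3 * (Y!0)^q + \<omega> * X!4 * (Y!1)^q + \<omega> * X!5 * (Y!0)^q
   + \<omega>^q * X!5 * (Y!1)^q + X!5 * (Y!2)^q"

definition perp :: "nat \<Rightarrow> 'a::field \<Rightarrow> 'a list set \<Rightarrow> 'a list set set" where
  "perp q \<omega> P = {R \<in> Sigma5 q. \<forall>x\<in>P. \<forall>y\<in>R. hform q \<omega> x y = 0}"

definition matvec :: "('a::field) list list \<Rightarrow> 'a list \<Rightarrow> 'a list" where
  "matvec M v = map (\<lambda>r. sum_list (map2 (*) r v)) M"

definition Mabcd :: "nat \<Rightarrow> 'a::field \<Rightarrow> 'a \<Rightarrow> 'a \<Rightarrow> 'a \<Rightarrow> 'a \<Rightarrow> 'a list list" where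
  "Mabcd q \<omega> a b c d =
    [[a^2, 0, 0, 0, c^2, c * (a + c * \<omega>^q) / \<omega>],
     [0, a^(2*q), 0, c^(2*q), 0, c^q * (a^q + c^q * \<omega>) / \<omega>^q],
     [a*b, a^q * b^q, 1, c^q * d^q, c*d,
        d * (a + c * \<omega>^q) / \<omega> + d^q * (a^q + c^q * \<omega>) / \<omega>^q + 1 / \<omega>^(q+1)],
     [0, b^(2*q), 0, d^(2*q), 0, (d^q * (b^q + d^q * \<omega>) + \<omega>) / \<omega>^q],
     [b^2, 0, 0, 0, d^2, (d * (b + d * \<omega>^q) + \<omega>^q) / \<omega>],
     [0, 0, 0, 0, 0, 1]]"

definition projmap :: "('a::field) list list \<Rightarrow> 'a list set \<Rightarrow> 'a list set" where
  "projmap M = restrict (\<lambda>P. matvec M ` P) PG5"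

definition Ggrp :: "nat \<Rightarrow> 'a::field \<Rightarrow> ('a list set \<Rightarrow> 'a list set) set" where
  "Ggrp q \<omega> = {projmap (Mabcd q \<omega> a b c d) | a b c d. a * d + b * c = 1}"

definition Sgam :: "nat \<Rightarrow> 'a::field \<Rightarrow> 'a \<Rightarrow> 'a list set" where
  "Sgam q \<omega> \<gamma> = ptof [\<gamma> / \<omega>, \<gamma>^q / \<omega>^q, \<omega>^q * \<gamma> / \<omega> + \<omega> * \<gamma>^q / \<omega>^q, 1, 1, 1]"

definition comb4 :: "(nat \<Rightarrow> 'a::field) \<Rightarrow> (nat \<Rightarrow> 'a list) \<Rightarrow> 'a list" where
  "comb4 l u = map (\<lambda>i. \<Sum>j<4. l j * (u j ! i)) [0..<6]"

definition frame4 :: "nat \<Rightarrow> (nat \<Rightarrow> ('a::field) list) \<Rightarrow> bool" where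
  "frame4 q u \<longleftrightarrow> (\<forall>j<4. sigvec q (u j)) \<and>
     (\<forall>l. (\<forall>j<4. l j \<in> subF q) \<and> comb4 l u = replicate 6 0 \<longrightarrow> (\<forall>j<4. l j = (0::'a)))"

definition solid_of_Sigma :: "nat \<Rightarrow> ('a::field) list set set \<Rightarrow> bool" where
  "solid_of_Sigma q T \<longleftrightarrow> (\<exists>u. frame4 q u \<and>
     T = {ptof (comb4 l u) | l. (\<forall>j<4. l j \<in> subF q) \<and> (\<exists>j<4. l j \<noteq> 0)})"

definition elliptic_quadric_of :: "nat \<Rightarrow> ('a::field) list set set \<Rightarrow> 'a list set set \<Rightarrow> bool" where
  "elliptic_quadric_of q T E \<longleftrightarrow> (\<exists>u d. frame4 q u \<and> d \<in> subF q \<and>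
     (\<forall>t\<in>subF q. t^2 + t + d \<noteq> 0) \<and>
     T = {ptof (comb4 l u) | l. (\<forall>j<4. l j \<in> subF q) \<and> (\<exists>j<4. l j \<noteq> 0)} \<and>
     E = {ptof (comb4 l u) | l. (\<forall>j<4. l j \<in> subF q) \<and> (\<exists>j<4. l j \<noteq> 0) \<and>
            l 0 * l 1 + (l 2)^2 + l 2 * l 3 + d * (l 3)^2 = 0})"

end

theory Submission
  imports Defs "HOL-Number_Theory.Residues"
begin

text \<open>
  An element of \<open>G\<close> is given by a matrix \<open>A = (a, b, c, d)\<close> of \<open>SL(2, q\<^sup>2)\<close>, and \<open>A\<close> maps
  \<open>S\<^sub>\<gamma>\<close> to the point determined by \<open>(Q(a, c), Q(b, d), Tr(\<beta>(A) / \<omega>))\<close>, where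
  \<open>Q(x, y) = \<gamma>x\<^sup>2 + xy + y\<^sup>2\<close> is anisotropic because \<open>X\<^sup>2 + X + \<gamma>\<close> is irreducible,
  \<open>\<beta>(A) = \<gamma>ab + ad + cd\<close> and \<open>Tr\<close> is the trace of \<open>GF(q\<^sup>2)\<close> over \<open>GF(q)\<close>. Two matrices give the
  same image exactly when they differ by a left factor from the torus
  \<open>{(b + d, b, b\<gamma>, d) | Q(b, d) = 1}\<close> of order \<open>q\<^sup>2 + 1\<close>: the quotient preserves \<open>Q\<close> up to the
  two shapes allowed by \<open>s\<^sup>2 + s = 0\<close>, and the second shape shifts the trace coordinate.
  As \<open>G\<close> acts faithfully, the torus is the stabiliser and the orbit has
  \<open>|SL(2, q\<^sup>2)| / (q\<^sup>2 + 1) = q\<^sup>2(q\<^sup>2 - 1)\<close> points.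

  The points of \<open>\<Pi> \<inter> S\<^sub>\<gamma>\<^sup>\<perp>\<close> are those of the form
  \<open>(\<alpha>, \<alpha>\<^sup>q, Tr \<alpha> + Tr(\<gamma>\<beta>\<^sup>q), \<beta>, \<beta>\<^sup>q, 0)\<close>, a solid. In a suitable \<open>GF(q)\<close>-frame the quadric
  reads \<open>l\<^sub>0l\<^sub>1 + l\<^sub>2\<^sup>2 + l\<^sub>2l\<^sub>3 + (Tr \<gamma>)\<^sup>2l\<^sub>3\<^sup>2\<close>, which is elliptic: a root in \<open>GF(q)\<close> of
  \<open>t\<^sup>2 + t + (Tr \<gamma>)\<^sup>2\<close> would make the absolute trace of \<open>\<gamma>\<close> vanish, i.e. make
  \<open>X\<^sup>2 + X + \<gamma>\<close> reducible.
\<close>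

lemma power2_minus_one_nat: "(n::nat)^2 - 1 = (n + 1) * (n - 1)"
  by (cases n) (simp_all add: power2_eq_square)

lemma card_image_mult_card_fibre:
  assumes "finite A" and fibre: "\<And>x. x \<in> A \<Longrightarrow> card {y\<in>A. f y = f x} = k"
  shows "k * card (f ` A) = card A"
proof -
  define C where "C = (\<lambda>z. {y\<in>A. f y = z}) ` (f ` A)"
  have "k * card C = card (\<Union>C)"
    by (rule card_partition) (use assms in \<open>auto simp: C_def\<close>)
  moreover have "\<Union>C = A"
    by (auto simp: C_def)
  moreover have "card C = card (f ` A)"
    unfolding C_def by (rule card_image) (auto simp: inj_on_def)
  ultimately show ?thesis
    by simp
qed

section \<open>Finite fields and characteristic two\<close>

definition units_group :: "('a::field) monoid" where
  "units_group = \<lparr>carrier = UNIV - {0}, monoid.mult = (*), one = 1\<rparr>"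

lemma group_units_group: "group (units_group :: ('a::field) monoid)"
proof (rule groupI)
  fix x :: 'a assume "x \<in> carrier units_group"
  then show "\<exists>y\<in>carrier units_group. y \<otimes>\<^bsub>units_group\<^esub> x = \<one>\<^bsub>units_group\<^esub>"
    by (intro bexI[of _ "inverse x"]) (auto simp: units_group_def)
qed (auto simp: units_group_def)

lemma one_units_group: "\<one>\<^bsub>units_group\<^esub> = (1::'a::field)"
  by (simp add: units_group_def)

lemma units_group_pow: "x [^]\<^bsub>units_group\<^esub> (n::nat) = (x::'a::field) ^ n"
  by (induction n) (simp_all add: units_group_def mult.commute)

lemma field_power_card_eq_self:
  fixes x :: "'a::{field,finite}"
  shows "x ^ card (UNIV :: 'a set) = x"
proof -
  have "0 < card (UNIV :: 'a set)"
    by (rule finite_UNIV_card_ge_0) simp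
  then obtain n where n: "card (UNIV :: 'a set) = Suc n"
    using gr0_conv_Suc by blast
  show ?thesis
  proof (cases "x = 0")
    case False
    then have "x [^]\<^bsub>units_group\<^esub> order (units_group :: 'a monoid) = \<one>\<^bsub>units_group\<^esub>"
      by (intro group.pow_order_eq_1[OF group_units_group]) (simp add: units_group_def)
    moreover have "order (units_group :: 'a monoid) = n"
      by (simp add: order_def units_group_def card_Diff_singleton n)
    ultimately show ?thesis
      by (simp add: units_group_pow one_units_group n)
  qed (simp add: n)
qed

lemma CHAR_eq_2_if_card_power_2:
  assumes "card (UNIV :: 'a::{field,finite} set) = 2 ^ n"
  shows "CHAR('a) = 2"
proof -
  have p: "prime CHAR('a)"
    by (rule prime_CHAR_semidom) (simp add: finite_imp_CHAR_pos)
  have "CHAR('a) dvd 2 ^ n"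
    using CHAR_dvd_CARD[where 'a='a] assms by simp
  then have "CHAR('a) dvd 2"
    using p prime_dvd_power by blast
  then show ?thesis
    using p by (metis primes_dvd_imp_eq two_is_prime_nat)
qed

context
  assumes char2: "CHAR('a::field) = 2"
begin

lemma two_eq_zero_CHAR_2: "(2::'a) = 0"
  using of_nat_CHAR[where 'a='a] char2 by simp

lemma add_self_CHAR_2: "(x::'a) + x = 0"
  by (metis mult_2 mult_zero_left two_eq_zero_CHAR_2)

lemma numeral_Bit0_CHAR_2: "(numeral (Num.Bit0 n) :: 'a) = 0"
  by (subst numeral_Bit0) (rule add_self_CHAR_2)

lemma numeral_Bit1_CHAR_2: "(numeral (Num.Bit1 n) :: 'a) = 1"
  by (subst numeral_Bit1) (simp add: add_self_CHAR_2)

lemma add_eq_iff_CHAR_2: "(a::'a) + b = c \<longleftrightarrow> a = c + b"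
  by (metis add.assoc add_0_right add_self_CHAR_2)

lemma add_eq_0_iff_CHAR_2: "(a::'a) + b = 0 \<longleftrightarrow> a = b"
  by (simp add: add_eq_iff_CHAR_2)

lemma power2_add_CHAR_2: "((x::'a) + y)^2 = x^2 + y^2"
  by (simp add: power2_eq_square ring_distribs numeral_Bit0_CHAR_2 mult_ac add_ac)

lemma power_two_power_add_CHAR_2: "((x::'a) + y) ^ (2^k) = x ^ (2^k) + y ^ (2^k)"
proof (induction k)
  case (Suc k)
  have "((x + y) ^ (2^k))^2 = (x ^ (2^k))^2 + (y ^ (2^k))^2"
    by (simp add: Suc power2_add_CHAR_2)
  then show ?case
    by (simp add: power_mult[symmetric] mult.commute)
qed simp

lemma power2_eq_iff_CHAR_2: "(x::'a)^2 = y^2 \<longleftrightarrow> x = y"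
  by (metis add_eq_0_iff_CHAR_2 power2_add_CHAR_2 power_eq_0_iff)

lemma artin_schreier_eq_iff_CHAR_2: "(y::'a)^2 + y = x^2 + x \<longleftrightarrow> y = x \<or> y = x + 1"
proof -
  have "(y + x) * (y + x + 1) = (y^2 + y) + (x^2 + x)"
    by (simp add: power2_eq_square ring_distribs numeral_Bit0_CHAR_2 mult_ac add_ac)
  then have "y^2 + y = x^2 + x \<longleftrightarrow> y + x = 0 \<or> y + x + 1 = 0"
    by (metis add_eq_0_iff_CHAR_2 mult_eq_0_iff)
  then show ?thesis
    by (metis add.assoc add.commute add_eq_0_iff_CHAR_2)
qed

lemma power2_sum_CHAR_2: "(\<Sum>i\<in>A. f i)^2 = (\<Sum>i\<in>A. (f i :: 'a)^2)"
  by (induction A rule: infinite_finite_induct) (simp_all add: power2_add_CHAR_2)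

lemma surj_power2_CHAR_2: "surj (\<lambda>x::'a. x^2)" if "finite (UNIV :: 'a set)"
  using finite_UNIV_inj_surj[OF that] by (simp add: inj_def power2_eq_iff_CHAR_2)

end

lemmas CHAR_2_simps = numeral_Bit0_CHAR_2 numeral_Bit1_CHAR_2 uminus_CHAR_2 minus_CHAR_2

lemma poly_nonzero_if_irreducible:
  fixes p :: "'a::field poly"
  assumes "irreducible p" and "2 \<le> degree p"
  shows "poly p s \<noteq> 0"
proof
  assume "poly p s = 0"
  then obtain r where r: "p = [:-s, 1:] * r"
    by (metis dvdE poly_eq_0_iff_dvd)
  have "\<not> is_unit r"
  proof
    assume "is_unit r"
    then have "degree r = 0" and "r \<noteq> 0"
      by (auto simp: is_unit_poly_iff)
    then have "degree p = 1"
      unfolding r by (subst degree_mult_eq) auto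
    then show False
      using assms(2) by simp
  qed
  moreover have "\<not> is_unit [:-s, 1:]"
    by (simp add: is_unit_poly_iff)
  ultimately show False
    using irreducibleD[OF assms(1) r] by blast
qed

section \<open>The absolute trace of a field of order \<open>2^n\<close>\<close>

definition abs_trace :: "nat \<Rightarrow> 'a::field \<Rightarrow> 'a" where
  "abs_trace n x = (\<Sum>i<n. x ^ (2^i))"

lemma abs_trace_add: "abs_trace (m + n) x = abs_trace m x + abs_trace n (x ^ 2^m)"
  by (induction n) (simp_all add: abs_trace_def power_add power_mult add.assoc)

lemma telescope_CHAR_2:
  assumes "CHAR('a::field) = 2"
  shows "(\<Sum>i<n. ((x::'a) ^ 2^i)^2 + x ^ 2^i) = x ^ 2^n + x"
proof (induction n)
  case 0
  then show ?case
    using add_self_CHAR_2[OF assms] by simp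
next
  case (Suc n)
  have "(x ^ 2^n)^2 = x ^ 2^Suc n"
    by (simp add: mult.commute flip: power_mult)
  with Suc show ?case
    using add_self_CHAR_2[OF assms, of "x ^ 2^n"] by (simp add: add_ac)
qed

lemma abs_trace_artin_schreier_CHAR_2:
  assumes "CHAR('a::field) = 2"
  shows "abs_trace n ((s::'a)^2 + s) = s ^ 2^n + s"
proof -
  have "(s^2 + s) ^ 2^i = (s ^ 2^i)^2 + s ^ 2^i" for i
    by (simp add: power_two_power_add_CHAR_2[OF assms] flip: power_mult)
      (simp add: power_mult mult.commute)
  then show ?thesis
    by (simp add: abs_trace_def telescope_CHAR_2[OF assms])
qed

lemma power2_add_abs_trace_CHAR_2:
  assumes "CHAR('a::field) = 2"
  shows "(abs_trace n x)^2 + abs_trace n x = (x::'a) ^ 2^n + x"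
proof -
  have "(abs_trace n x)^2 + abs_trace n x = (\<Sum>i<n. (x ^ 2^i)^2 + x ^ 2^i)"
    by (simp add: power2_sum_CHAR_2[OF assms] sum.distrib abs_trace_def)
  then show ?thesis
    by (simp add: telescope_CHAR_2[OF assms])
qed

context
  fixes n :: nat
  assumes card_2_power: "card (UNIV :: 'a::{field,finite} set) = 2 ^ n" and n_pos: "0 < n"
begin

private lemma char_2: "CHAR('a) = 2"
  by (rule CHAR_eq_2_if_card_power_2[OF card_2_power])

lemma abs_trace_artin_schreier: "abs_trace n ((s::'a)^2 + s) = 0"
  using field_power_card_eq_self[of s] card_2_power
  by (simp add: abs_trace_artin_schreier_CHAR_2[OF char_2] add_self_CHAR_2[OF char_2])

lemma card_artin_schreier_image: "card (range (\<lambda>s::'a. s^2 + s)) = 2 ^ (n - 1)"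
proof -
  have "card {y. y^2 + y = x^2 + x} = 2" for x :: 'a
  proof -
    have "{y. y^2 + y = x^2 + x} = {x, x + 1}"
      by (auto simp: artin_schreier_eq_iff_CHAR_2[OF char_2])
    then show ?thesis
      by simp
  qed
  then have "2 * card (range (\<lambda>s::'a. s^2 + s)) = 2 ^ n"
    using card_image_mult_card_fibre[of UNIV "\<lambda>s::'a. s^2 + s" 2] card_2_power by simp
  then show ?thesis
    using n_pos by (cases n) simp_all
qed

lemma abs_trace_eq_0_iff: "abs_trace n (x::'a) = 0 \<longleftrightarrow> (\<exists>s. s^2 + s = x)"
proof
  define P :: "'a poly" where "P = (\<Sum>i<n. Polynomial.monom 1 (2^i))"
  have poly_P: "poly P y = abs_trace n y" for y
    by (simp add: P_def abs_trace_def poly_sum poly_monom)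
  have "Polynomial.coeff P (2 ^ (n - 1)) = 1"
    using n_pos by (simp add: P_def coeff_sum coeff_monom power_inject_exp)
  then have "P \<noteq> 0"
    by auto
  have "degree P \<le> 2 ^ (n - 1)"
    unfolding P_def
  proof (rule degree_sum_le)
    fix i assume "i \<in> {..<n}"
    then have "(2::nat) ^ i \<le> 2 ^ (n - 1)"
      by (intro power_increasing) auto
    then show "degree (Polynomial.monom (1::'a) (2^i)) \<le> 2 ^ (n - 1)"
      using degree_monom_le order.trans by blast
  qed simp
  moreover have "card {y. poly P y = 0} \<le> degree P"
    by (rule card_poly_roots_bound[OF \<open>P \<noteq> 0\<close>])
  ultimately have "card {y::'a. abs_trace n y = 0} \<le> 2 ^ (n - 1)"
    unfolding poly_P by linarith
  moreover have sub: "range (\<lambda>s::'a. s^2 + s) \<subseteq> {y. abs_trace n y = 0}"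
    using abs_trace_artin_schreier by auto
  moreover have "card (range (\<lambda>s::'a. s^2 + s)) \<le> card {y::'a. abs_trace n y = 0}"
    using sub by (intro card_mono) simp_all
  ultimately have "range (\<lambda>s::'a. s^2 + s) = {y. abs_trace n y = 0}"
    by (intro card_subset_eq) (simp_all add: card_artin_schreier_image)
  moreover assume "abs_trace n x = 0"
  ultimately show "\<exists>s. s^2 + s = x"
    by (metis (mono_tags, lifting) imageE mem_Collect_eq)
qed (use abs_trace_artin_schreier in blast)

end

section \<open>Projective points\<close>

lemma mem_ptof: "y \<in> ptof v \<longleftrightarrow> (\<exists>c. c \<noteq> 0 \<and> y = map ((*) c) v)"
  by (auto simp: ptof_def)

lemma map_mult_one: "map ((*) (1::'a::field)) v = v"
  by (simp add: map_idI)

lemma mem_ptof_self: "(v::'a::field list) \<in> ptof v"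
  unfolding mem_ptof by (intro exI[of _ 1]) (simp add: map_mult_one)

lemma ptof_eq_imp_eq:
  assumes "ptof v = ptof (w::'a::field list)" "i < length w" "v ! i = 1" "w ! i = 1"
  shows "v = w"
proof -
  obtain c where c: "v = map ((*) c) w"
    using mem_ptof_self[of v] assms(1) by (auto simp: mem_ptof)
  then have "c = 1"
    using assms(2-4) by simp
  then show ?thesis
    using c by (simp add: map_mult_one)
qed

lemma ptof_in_PG5: "length (v::'a::field list) = 6 \<Longrightarrow> v ! 5 = 1 \<Longrightarrow> ptof v \<in> PG5"
  unfolding PG5_def by (rule CollectI, rule exI[of _ v]) auto

lemma sum_list_map2_scale:
  "sum_list (map2 (*) r (map ((*) c) v)) = c * sum_list (map2 (*) r (v::'a::comm_ring_1 list))"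
proof (induction r arbitrary: v)
  case (Cons a r)
  then show ?case
    by (cases v) (simp_all add: ring_distribs mult_ac)
qed simp

lemma matvec_scale: "matvec M (map ((*) c) v) = map ((*) c) (matvec M (v::'a::field list))"
  by (simp add: matvec_def sum_list_map2_scale)

lemma projmap_ptof:
  assumes "ptof (v::'a::field list) \<in> PG5"
  shows "projmap M (ptof v) = ptof (matvec M v)"
proof -
  have "matvec M ` ptof v = ptof (matvec M v)"
  proof (intro Set.set_eqI iffI)
    fix y assume "y \<in> ptof (matvec M v)"
    then obtain c where "c \<noteq> 0" "y = matvec M (map ((*) c) v)"
      by (auto simp: mem_ptof matvec_scale)
    then show "y \<in> matvec M ` ptof v"
      by (intro image_eqI[of _ _ "map ((*) c) v"]) (auto simp: mem_ptof)
  qed (fastforce simp: mem_ptof matvec_scale)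
  then show ?thesis
    using assms by (simp add: projmap_def)
qed

lemma hform_scale:
  assumes "length X = 6" "length Y = 6"
  shows "hform q \<omega> (map ((*) c) X) (map ((*) c') Y) = c * c'^q * hform q \<omega> X (Y::'a::field list)"
  using assms by (simp add: hform_def power_mult_distrib ring_distribs mult_ac)

definition quad_form :: "'a::field list \<Rightarrow> 'a" where
  "quad_form v = (v ! 2)^2 + v ! 0 * v ! 4 + v ! 1 * v ! 3"

lemma quad_form_scale: "length v = 6 \<Longrightarrow> quad_form (map ((*) c) v) = c^2 * quad_form v"
  by (simp add: quad_form_def power_mult_distrib ring_distribs mult_ac power2_eq_square)

lemma mem_Quad_iff: "P \<in> Quad q \<longleftrightarrow> P \<in> Pi4 q \<and> (\<forall>v\<in>P. quad_form v = 0)"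
  by (simp add: Quad_def quad_form_def)

section \<open>Two-by-two matrices\<close>

type_synonym 'a mat2 = "'a \<times> 'a \<times> 'a \<times> 'a"

fun det2 :: "'a::comm_ring_1 mat2 \<Rightarrow> 'a" where
  "det2 (a, b, c, d) = a * d - b * c"

fun mult2 :: "'a::comm_ring_1 mat2 \<Rightarrow> 'a mat2 \<Rightarrow> 'a mat2" where
  "mult2 (r11, r12, r21, r22) (a, b, c, d) =
     (r11 * a + r12 * c, r11 * b + r12 * d, r21 * a + r22 * c, r21 * b + r22 * d)"

fun adj2 :: "'a::comm_ring_1 mat2 \<Rightarrow> 'a mat2" where
  "adj2 (a, b, c, d) = (d, -b, -c, a)"

definition SL2 :: "'a::comm_ring_1 mat2 set" where
  "SL2 = {A. det2 A = 1}"

lemma mult2_assoc: "mult2 (mult2 X Y) Z = mult2 X (mult2 Y Z)"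
  by (cases X; cases Y; cases Z) (simp add: algebra_simps)

lemma det2_mult2: "det2 (mult2 X Y) = det2 X * det2 Y"
  by (cases X; cases Y) (simp add: algebra_simps)

lemma det2_adj2: "det2 (adj2 A) = det2 A"
  by (cases A) (simp add: algebra_simps)

lemma mult2_adj2: "mult2 A (adj2 A) = (det2 A, 0, 0, det2 A)"
  by (cases A) (simp add: algebra_simps)

lemma adj2_mult2: "mult2 (adj2 A) A = (det2 A, 0, 0, det2 A)"
  by (cases A) (simp add: algebra_simps)

lemma mult2_one [simp]: "mult2 (1, 0, 0, 1) A = A" "mult2 A (1, 0, 0, 1) = A"
  by (cases A; simp)+

lemma one_in_SL2: "(1, 0, 0, 1) \<in> SL2"
  by (simp add: SL2_def)

lemma mult2_right_cancel_SL2: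
  assumes "A \<in> SL2" "mult2 R A = mult2 R' A"
  shows "R = R'"
proof -
  have "mult2 (mult2 R A) (adj2 A) = mult2 (mult2 R' A) (adj2 A)"
    using assms(2) by simp
  then show ?thesis
    using assms(1) by (simp add: mult2_assoc mult2_adj2 SL2_def)
qed

fun first_column :: "'a mat2 \<Rightarrow> 'a \<times> 'a" where
  "first_column (a, b, c, d) = (a, c)"

lemma card_SL2_first_column_fibre:
  fixes a b c d :: "'a::{field,finite}"
  assumes "(a, b, c, d) \<in> SL2"
  shows "card {y\<in>SL2. first_column y = (a, c)} = card (UNIV :: 'a set)"
proof (cases "a = 0")
  case False
  have "{y\<in>SL2. first_column y = (a, c)} = range (\<lambda>b'. (a, b', c, (1 + b' * c) / a))"
  proof (intro Set.set_eqI iffI)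
    fix y assume y: "y \<in> {y\<in>SL2. first_column y = (a, c)}"
    obtain b' d' where "y = (a, b', c, d')" and "a * d' - b' * c = 1"
      using y by (cases y) (auto simp: SL2_def)
    then show "y \<in> range (\<lambda>b'. (a, b', c, (1 + b' * c) / a))"
      using False by (auto simp: field_simps)
  qed (use False in \<open>auto simp: SL2_def\<close>)
  moreover have "inj (\<lambda>b'. (a, b', c, (1 + b' * c) / a))"
    by (auto simp: inj_def)
  ultimately show ?thesis
    by (simp add: card_image)
next
  case True
  then have "c \<noteq> 0"
    using assms by (auto simp: SL2_def)
  have "{y\<in>SL2. first_column y = (a, c)} = range (\<lambda>d'. (a, - 1 / c, c, d'))"
  proof (intro Set.set_eqI iffI)
    fix y assume y: "y \<in> {y\<in>SL2. first_column y = (a, c)}"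
    obtain b' d' where y_eq: "y = (a, b', c, d')" and "- (b' * c) = 1"
      using y True by (cases y) (auto simp: SL2_def)
    then have "b' = - 1 / c"
      using \<open>c \<noteq> 0\<close> by (metis eq_divide_eq minus_equation_iff)
    then show "y \<in> range (\<lambda>d'. (a, - 1 / c, c, d'))"
      by (simp add: y_eq)
  qed (use True \<open>c \<noteq> 0\<close> in \<open>auto simp: SL2_def\<close>)
  moreover have "inj (\<lambda>d'::'a. (a, - 1 / c, c, d'))"
    by (auto simp: inj_def)
  ultimately show ?thesis
    by (simp add: card_image)
qed

lemma first_column_SL2: "first_column ` SL2 = UNIV - {(0 :: 'a::field, 0)}"
proof (intro Set.set_eqI iffI)
  fix p :: "'a \<times> 'a"
  assume p: "p \<in> UNIV - {(0, 0)}"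
  obtain a c where p_eq: "p = (a, c)"
    by (cases p)
  show "p \<in> first_column ` SL2"
  proof (cases "a = 0")
    case False
    then have "(a, 0, c, 1 / a) \<in> SL2"
      by (simp add: SL2_def)
    then show ?thesis
      by (force simp: p_eq)
  next
    case True
    then have "(a, - 1 / c, c, 0) \<in> SL2"
      using p p_eq by (simp add: SL2_def)
    then show ?thesis
      by (force simp: p_eq)
  qed
qed (auto simp: SL2_def)

lemma card_UNIV_pairs: "card (UNIV :: ('a::finite \<times> 'a) set) = card (UNIV :: 'a set)^2"
  by (simp add: power2_eq_square card_cartesian_product flip: UNIV_Times_UNIV del: UNIV_Times_UNIV)

lemma card_SL2:
  "card (SL2 :: 'a::{field,finite} mat2 set)
     = card (UNIV :: 'a set) * (card (UNIV :: 'a set)^2 - 1)"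
proof -
  have "card (first_column ` (SL2 :: 'a mat2 set)) = card (UNIV :: 'a set)^2 - 1"
    by (simp add: first_column_SL2 card_Diff_singleton card_UNIV_pairs)
  moreover have
    "card (UNIV :: 'a set) * card (first_column ` (SL2 :: 'a mat2 set)) = card (SL2 :: 'a mat2 set)"
    by (rule card_image_mult_card_fibre)
      (auto simp: card_SL2_first_column_fibre elim!: first_column.elims)
  ultimately show ?thesis
    by simp
qed

section \<open>The field of order \<open>q\<^sup>2\<close>, \<open>q\<close> even\<close>

locale pg5_setting =
  fixes q k :: nat and \<omega> \<gamma> :: "'a::{field,finite}"
  assumes q_eq: "q = 2^k" and k_pos: "0 < k"
    and card_field: "card (UNIV :: 'a set) = q^2"
    and omega_notin_subF: "\<omega> \<notin> subF q" and omega_add_power_q: "\<omega> + \<omega>^q = 1"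
    and irreducible_gamma: "irreducible [:\<gamma>, 1, 1:]"
begin

lemma card_field_2_power: "card (UNIV :: 'a set) = 2 ^ (2 * k)"
  by (simp add: card_field q_eq power_mult[symmetric] mult.commute)

lemma CHAR_eq_2: "CHAR('a) = 2"
  by (rule CHAR_eq_2_if_card_power_2[OF card_field_2_power])

lemmas char2_simps = CHAR_2_simps[OF CHAR_eq_2]
lemmas add_self = add_self_CHAR_2[OF CHAR_eq_2]
lemmas add_eq_iff = add_eq_iff_CHAR_2[OF CHAR_eq_2]
lemmas add_eq_0_iff = add_eq_0_iff_CHAR_2[OF CHAR_eq_2]
lemmas power2_add = power2_add_CHAR_2[OF CHAR_eq_2]
lemmas power2_eq_iff = power2_eq_iff_CHAR_2[OF CHAR_eq_2]
lemmas char2_ring_simps = ring_distribs power2_eq_square char2_simps mult_ac add_ac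

lemma q_pos: "0 < q"
  using q_eq by simp

lemma q_ge_2: "2 \<le> q"
proof -
  have "(2::nat)^1 \<le> 2^k"
    using k_pos by (intro power_increasing) auto
  then show ?thesis
    by (simp add: q_eq)
qed

lemma power_q_add: "((x::'a) + y)^q = x^q + y^q"
  using q_eq power_two_power_add_CHAR_2[OF CHAR_eq_2] by simp

lemma power_q_power_q: "((x::'a)^q)^q = x"
  using field_power_card_eq_self[of x] by (simp add: card_field power2_eq_square flip: power_mult)

lemma zero_power_q [simp]: "(0::'a)^q = 0"
  using q_pos by simp

lemma power_q_sum: "(\<Sum>i\<in>I. f i)^q = (\<Sum>i\<in>I. (f i :: 'a)^q)"
  by (induction I rule: infinite_finite_induct) (simp_all add: power_q_add)

lemma subF_iff: "x \<in> subF q \<longleftrightarrow> x^q = x"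
  by (simp add: subF_def)

lemma omega_nonzero: "\<omega> \<noteq> 0"
  using omega_notin_subF by (auto simp: subF_def)

lemma omega_power_q: "\<omega>^q = 1 + \<omega>"
  using omega_add_power_q by (metis add.commute add_eq_iff)

lemma one_add_omega_nonzero: "1 + \<omega> \<noteq> 0"
  using omega_nonzero omega_power_q by (metis power_eq_0_iff)

lemma gamma_no_root: "s^2 + s + \<gamma> \<noteq> 0"
  using poly_nonzero_if_irreducible[OF irreducible_gamma, of s]
  by (simp add: algebra_simps power2_eq_square)

section \<open>The quadratic form of \<open>\<gamma>\<close> and the orbit coordinates\<close>

definition qf :: "'a \<Rightarrow> 'a \<Rightarrow> 'a" where
  "qf x y = \<gamma> * x^2 + x * y + y^2"

lemma qf_anisotropic: "qf x y = 0 \<Longrightarrow> x = 0 \<and> y = 0"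
proof (rule ccontr)
  assume qf0: "qf x y = 0" and nz: "\<not> (x = 0 \<and> y = 0)"
  then have "x \<noteq> 0"
    by (auto simp: qf_def)
  then have "(y / x)^2 + y / x + \<gamma> = qf x y / x^2"
    by (simp add: qf_def field_simps power2_eq_square)
  then show False
    using qf0 gamma_no_root by simp
qed

lemma qf_scale: "qf (s * x) (s * y) = s^2 * qf x y"
  by (simp add: qf_def char2_ring_simps)

lemma qf_linear:
  "qf (m11 * x + m12 * y) (m21 * x + m22 * y)
     = x^2 * qf m11 m21 + x * y * (m11 * m22 + m12 * m21) + y^2 * qf m12 m22"
  by (simp add: qf_def char2_ring_simps)

text \<open>The two families correspond to the two roots \<open>s \<in> {0, 1}\<close> of \<open>s\<^sup>2 + s = 0\<close>.\<close>

lemma det_one_qf_cases: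
  assumes det: "r11 * r22 + r12 * r21 = 1" and qf1: "qf r11 r21 = \<gamma>" and qf2: "qf r12 r22 = 1"
  shows "(r11 = r12 + r22 \<and> r21 = r12 * \<gamma>) \<or> (r11 = r22 \<and> r21 = r12 * \<gamma> + r22)"
proof -
  define e where "e = r11 + (r12 + r22)"
  define f where "f = r21 + r12 * \<gamma>"
  have "e * r22 + r12 * f = (r11 * r22 + r12 * r21) + qf r12 r22"
    by (simp add: e_def f_def qf_def char2_ring_simps)
  then have ef: "e * r22 = r12 * f"
    using det qf2 by (simp add: add_self add_eq_0_iff)
  have nz: "\<not> (r12 = 0 \<and> r22 = 0)"
    using qf2 by (auto simp: qf_def)
  obtain s where s: "e = s * r12" "f = s * r22"
  proof (cases "r22 = 0")
    case True
    then show ?thesis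
      using nz ef by (intro that[of "e / r12"]) auto
  next
    case False
    then show ?thesis
      using ef by (intro that[of "f / r22"]) (auto simp: field_simps)
  qed
  have r11: "r11 = r12 + r22 + s * r12"
    using s(1) unfolding e_def add_eq_iff by (simp add: add_ac)
  have r21: "r21 = r12 * \<gamma> + s * r22"
    using s(2) unfolding f_def add_eq_iff by (simp add: add_ac)
  have "qf r11 r21 = (\<gamma> + s + s^2) * qf r12 r22"
    unfolding r11 r21 qf_def by (simp add: char2_ring_simps)
  then have "s * (s + 1) = 0"
    using qf1 qf2 by (simp add: char2_ring_simps)
  then have "s = 0 \<or> s = 1"
    by (auto simp: add_eq_0_iff)
  then show ?thesis
    using r11 r21 by (auto simp: add_self add_ac)
qed

definition mixed_term :: "'a mat2 \<Rightarrow> 'a" where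
  "mixed_term A = (case A of (a, b, c, d) \<Rightarrow> \<gamma> * a * b + a * d + c * d)"

definition trace_q :: "'a \<Rightarrow> 'a" where
  "trace_q x = x + x^q"

text \<open>The image of \<open>S\<^sub>\<gamma>\<close> under the element of \<open>G\<close> given by \<open>A\<close> determines and is
  determined by these three field elements.\<close>

definition orbit_coords :: "'a mat2 \<Rightarrow> 'a \<times> 'a \<times> 'a" where
  "orbit_coords A = (case A of (a, b, c, d) \<Rightarrow> (qf a c, qf b d, trace_q (mixed_term A / \<omega>)))"

definition stab_torus :: "'a mat2 set" where
  "stab_torus = {(b + d, b, b * \<gamma>, d) | b d. qf b d = 1}"

lemma trace_q_add: "trace_q (x + y) = trace_q x + trace_q y"
  by (simp add: trace_q_def power_q_add add_ac)

lemma trace_q_inverse_omega: "trace_q (1 / \<omega>) = 1 / (\<omega> * (1 + \<omega>))"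
proof -
  have "trace_q (1 / \<omega>) = 1 / \<omega> + 1 / (1 + \<omega>)"
    by (simp add: trace_q_def power_divide omega_power_q)
  also have "\<dots> = 1 / (\<omega> * (1 + \<omega>))"
    using omega_nonzero one_add_omega_nonzero by (simp add: field_simps char2_ring_simps add_self)
  finally show ?thesis .
qed

lemma qf_torus_mult: "qf ((b0 + d0) * x + b0 * y) (b0 * \<gamma> * x + d0 * y) = qf b0 d0 * qf x y"
  by (simp add: qf_def char2_ring_simps)

lemma mixed_term_torus_mult:
  "mixed_term (mult2 (b0 + d0, b0, b0 * \<gamma>, d0) A) = qf b0 d0 * mixed_term A"
  by (cases A) (simp add: mixed_term_def qf_def char2_ring_simps)

lemma mixed_term_mult2_twisted:
  "mixed_term (mult2 (d0, b0, b0 * \<gamma> + d0, d0) A) = qf b0 d0 * (mixed_term A + det2 A)"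
  by (cases A) (simp add: mixed_term_def qf_def char2_ring_simps)

lemma orbit_coords_torus_mult:
  assumes A: "A \<in> SL2" and R: "R \<in> stab_torus"
  shows "mult2 R A \<in> SL2 \<and> orbit_coords (mult2 R A) = orbit_coords A"
proof -
  obtain b0 d0 where R_eq: "R = (b0 + d0, b0, b0 * \<gamma>, d0)" and qf0: "qf b0 d0 = 1"
    using R by (auto simp: stab_torus_def)
  obtain a b c d where A_eq: "A = (a, b, c, d)"
    by (cases A)
  have "det2 R = qf b0 d0"
    by (simp add: R_eq qf_def char2_ring_simps)
  then have "mult2 R A \<in> SL2"
    using A qf0 by (simp add: det2_mult2 SL2_def)
  moreover have "orbit_coords (mult2 R A) = orbit_coords A"
    using qf_torus_mult mixed_term_torus_mult[of b0 d0 A] qf0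
    by (simp add: orbit_coords_def R_eq A_eq)
  ultimately show ?thesis ..
qed

lemma orbit_coords_eq_imp_quotient:
  assumes A: "A \<in> SL2" and A': "A' \<in> SL2" and eq: "orbit_coords A' = orbit_coords A"
    and R: "mult2 A' (adj2 A) = (r11, r12, r21, r22)"
  shows "r11 * r22 + r12 * r21 = 1" and "qf r11 r21 = \<gamma>" and "qf r12 r22 = 1"
proof -
  obtain a b c d where A_eq: "A = (a, b, c, d)"
    by (cases A)
  obtain a' b' c' d' where A'_eq: "A' = (a', b', c', d')"
    by (cases A')
  have det: "a * d + b * c = 1" and det': "a' * d' + b' * c' = 1"
    using A A' by (simp_all add: A_eq A'_eq SL2_def char2_simps)
  have qf1: "qf a' c' = qf a c" and qf2: "qf b' d' = qf b d"
    using eq by (simp_all add: orbit_coords_def A_eq A'_eq)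
  have r: "r11 = a' * d + b' * c" "r12 = a' * b + b' * a"
    "r21 = c' * d + d' * c" "r22 = c' * b + d' * a"
    using R by (simp_all add: A_eq A'_eq char2_simps)
  show "r11 * r22 + r12 * r21 = 1"
    using det2_mult2[of A' "adj2 A"] A A' by (simp add: R det2_adj2 SL2_def char2_simps)
  have "qf r11 r21 = d^2 * qf a c + d * c * (a * d + b * c) + c^2 * qf b d"
    using qf_linear[of a' d b' c c' d'] qf1 qf2 det det' by (simp add: r mult_ac)
  also have "\<dots> = qf (a * d + b * c) (c * d + d * c)"
    using qf_linear[of a d b c c d] by (simp add: mult_ac)
  finally show "qf r11 r21 = \<gamma>"
    using det by (simp add: add_self qf_def mult.commute)
  have "qf r12 r22 = b^2 * qf a c + b * a * (a * d + b * c) + a^2 * qf b d"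
    using qf_linear[of a' b b' a c' d'] qf1 qf2 det det' by (simp add: r mult_ac)
  also have "\<dots> = qf (a * b + b * a) (c * b + d * a)"
    using qf_linear[of a b b a c d] by (simp add: mult_ac)
  finally show "qf r12 r22 = 1"
    using det by (simp add: add_self qf_def mult.commute add.commute)
qed

lemma orbit_coords_eq_imp_torus:
  assumes A: "A \<in> SL2" and A': "A' \<in> SL2" and eq: "orbit_coords A' = orbit_coords A"
  shows "\<exists>R\<in>stab_torus. A' = mult2 R A"
proof -
  obtain r11 r12 r21 r22 where R: "mult2 A' (adj2 A) = (r11, r12, r21, r22)"
    by (metis prod_cases4)
  have A'_eq: "A' = mult2 (r11, r12, r21, r22) A"
    using mult2_assoc[of A' "adj2 A" A] adj2_mult2[of A] A by (simp add: R SL2_def)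
  note quotient = orbit_coords_eq_imp_quotient[OF A A' eq R]
  consider "r11 = r12 + r22 \<and> r21 = r12 * \<gamma>" | "r11 = r22 \<and> r21 = r12 * \<gamma> + r22"
    using det_one_qf_cases[OF quotient] by blast
  then show ?thesis
  proof cases
    case 1
    then have "(r11, r12, r21, r22) \<in> stab_torus"
      using quotient(3) by (auto simp: stab_torus_def)
    then show ?thesis
      using A'_eq by blast
  next
    case 2
    text \<open>The second family adds \<open>1\<close> to the mixed term, which changes its trace.\<close>
    then have "mixed_term A' = mixed_term A + 1"
      using A'_eq mixed_term_mult2_twisted[of r22 r12 A] quotient(3) A by (simp add: SL2_def)
    moreover have "trace_q (mixed_term A' / \<omega>) = trace_q (mixed_term A / \<omega>)"
      using eq by (cases A, cases A') (simp add: orbit_coords_def)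
    ultimately have "trace_q (1 / \<omega>) = 0"
      by (simp add: add_divide_distrib trace_q_add)
    then show ?thesis
      using trace_q_inverse_omega omega_nonzero one_add_omega_nonzero by simp
  qed
qed

definition qf_one :: "('a \<times> 'a) set" where
  "qf_one = {p. qf (fst p) (snd p) = 1}"

lemma card_qf_level_set:
  assumes "t \<noteq> 0"
  shows "card {p. qf (fst p) (snd p) = t} = card qf_one"
proof -
  obtain s where s: "s^2 = t"
    using surj_power2_CHAR_2[OF CHAR_eq_2] by (metis finite surjD)
  then have "s \<noteq> 0"
    using assms by auto
  have "{p. qf (fst p) (snd p) = t} = (\<lambda>(u, v). (s * u, s * v)) ` qf_one"
  proof (intro Set.set_eqI iffI)
    fix p assume p: "p \<in> {p. qf (fst p) (snd p) = t}"
    obtain u v where p_eq: "p = (u, v)"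
      by (cases p)
    have "qf u v = s^2 * qf (u / s) (v / s)"
      using qf_scale[of s "u / s" "v / s"] \<open>s \<noteq> 0\<close> by simp
    then have "(u / s, v / s) \<in> qf_one"
      using p p_eq s assms by (simp add: qf_one_def)
    moreover have "p = (\<lambda>(u, v). (s * u, s * v)) (u / s, v / s)"
      using \<open>s \<noteq> 0\<close> p_eq by simp
    ultimately show "p \<in> (\<lambda>(u, v). (s * u, s * v)) ` qf_one"
      by blast
  qed (auto simp: qf_one_def qf_scale s)
  moreover have "inj_on (\<lambda>(u, v). (s * u, s * v)) qf_one"
    using \<open>s \<noteq> 0\<close> by (auto simp: inj_on_def)
  ultimately show ?thesis
    by (simp add: card_image)
qed

text \<open>The nonzero vectors are partitioned into the \<open>q\<^sup>2 - 1\<close> nonzero level sets of the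
  anisotropic form, all of the same size.\<close>

lemma card_qf_one: "card qf_one = q^2 + 1"
proof -
  define U where "U = (UNIV :: ('a \<times> 'a) set) - {(0, 0)}"
  define f where "f = (\<lambda>p::'a \<times> 'a. qf (fst p) (snd p))"
  have f_nonzero: "f p \<noteq> 0 \<longleftrightarrow> p \<in> U" for p
    using qf_anisotropic[of "fst p" "snd p"] by (cases p) (auto simp: U_def f_def qf_def)
  have "card {y\<in>U. f y = f x} = card qf_one" if "x \<in> U" for x
  proof -
    have "f x \<noteq> 0"
      using f_nonzero that by blast
    then have "{y\<in>U. f y = f x} = {p. f p = f x}"
      by (auto simp flip: f_nonzero)
    then show ?thesis
      using card_qf_level_set[OF \<open>f x \<noteq> 0\<close>] by (simp add: f_def)
  qed
  then have "card qf_one * card (f ` U) = card U"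
    by (intro card_image_mult_card_fibre) (simp_all add: U_def)
  moreover have "f ` U = UNIV - {0}"
  proof (intro Set.set_eqI iffI)
    fix t :: 'a
    assume t: "t \<in> UNIV - {0}"
    obtain s where "s^2 = t"
      using surj_power2_CHAR_2[OF CHAR_eq_2] by (metis finite surjD)
    then have "f (0, s) = t"
      by (simp add: f_def qf_def)
    then show "t \<in> f ` U"
      using t f_nonzero by (metis DiffE image_eqI singletonI)
  qed (use f_nonzero in auto)
  ultimately have "card qf_one * (q^2 - 1) = (q^2)^2 - 1"
    by (simp add: U_def card_Diff_singleton card_field card_UNIV_pairs)
  also have "\<dots> = (q^2 + 1) * (q^2 - 1)"
    by (rule power2_minus_one_nat)
  finally have "card qf_one * (q^2 - 1) = (q^2 + 1) * (q^2 - 1)" .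
  moreover have "q^2 - 1 \<noteq> 0"
    using power_mono[OF q_ge_2, of 2] by simp
  ultimately show ?thesis
    by (metis mult_right_cancel)
qed

lemma card_stab_torus: "card stab_torus = q^2 + 1"
proof -
  have "stab_torus = (\<lambda>(b, d). (b + d, b, b * \<gamma>, d)) ` qf_one"
    by (auto simp: stab_torus_def qf_one_def)
  moreover have "inj_on (\<lambda>(b, d). (b + d, b, b * \<gamma>, d)) qf_one"
    by (auto simp: inj_on_def)
  ultimately show ?thesis
    by (simp add: card_image card_qf_one)
qed

lemma card_orbit_coords: "card (orbit_coords ` SL2) = q^2 * (q^2 - 1)"
proof -
  have fibre: "card {y\<in>SL2. orbit_coords y = orbit_coords x} = q^2 + 1" if x: "x \<in> SL2" for x
  proof -
    have "{y\<in>SL2. orbit_coords y = orbit_coords x} = (\<lambda>R. mult2 R x) ` stab_torus"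
      using orbit_coords_eq_imp_torus[OF x] orbit_coords_torus_mult[OF x] by blast
    moreover have "inj_on (\<lambda>R. mult2 R x) stab_torus"
      using mult2_right_cancel_SL2[OF x] by (auto intro: inj_onI)
    ultimately show ?thesis
      by (simp add: card_image card_stab_torus)
  qed
  have "(q^2 + 1) * card (orbit_coords ` SL2) = card (SL2 :: 'a mat2 set)"
    using card_image_mult_card_fibre[of SL2 orbit_coords "q^2 + 1"] fibre by simp
  also have "\<dots> = q^2 * ((q^2)^2 - 1)"
    by (simp add: card_SL2 card_field)
  also have "\<dots> = (q^2 + 1) * (q^2 * (q^2 - 1))"
    unfolding power2_minus_one_nat by (simp only: mult_ac)
  finally show ?thesis
    by (simp only: mult_left_cancel add_is_0 one_neq_zero simp_thms)
qed

section \<open>The image of \<open>S\<^sub>\<gamma>\<close> under \<open>G\<close>\<close>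

definition s_vec :: "'a list" where
  "s_vec = [\<gamma> / \<omega>, \<gamma>^q / \<omega>^q, \<omega>^q * \<gamma> / \<omega> + \<omega> * \<gamma>^q / \<omega>^q, 1, 1, 1]"

text \<open>The constant term of the third entry is the third entry of \<open>s_vec\<close> plus the constant
  \<open>1 / \<omega>\<^sup>q\<^sup>+\<^sup>1\<close> of the matrix.\<close>

fun orbit_vec :: "'a \<times> 'a \<times> 'a \<Rightarrow> 'a list" where
  "orbit_vec (u, v, t) =
     [u / \<omega>, (u / \<omega>)^q, t + s_vec ! 2 + 1 / (\<omega> * (1 + \<omega>)), ((v + \<omega>^q) / \<omega>)^q, (v + \<omega>^q) / \<omega>, 1]"

lemma Sgam_eq: "Sgam q \<omega> \<gamma> = ptof s_vec"
  by (simp add: Sgam_def s_vec_def)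

lemma length_s_vec: "length s_vec = 6"
  by (simp add: s_vec_def)

lemma length_orbit_vec: "length (orbit_vec x) = 6"
  by (cases x) simp

lemma orbit_vec_last: "orbit_vec x ! 5 = 1"
  by (cases x) simp

lemma inj_orbit_vec: "inj orbit_vec"
proof (rule injI)
  fix x y assume eq: "orbit_vec x = orbit_vec y"
  obtain u v t where x: "x = (u, v, t)"
    by (cases x)
  obtain u' v' t' where y: "y = (u', v', t')"
    by (cases y)
  show "x = y"
    using eq omega_nonzero by (simp add: x y)
qed

lemma omega_mult_eq_imp: "\<omega> * x = y \<Longrightarrow> x = y / \<omega>"
  using omega_nonzero by (simp add: field_simps)

lemma omega_mult_divide: "\<omega> * (x / \<omega>) = x"
  using omega_nonzero by simp

text \<open>Rows 2 and 4 of \<open>M\<^sub>a\<^sub>,\<^sub>b\<^sub>,\<^sub>c\<^sub>,\<^sub>d s_vec\<close> are the \<open>q\<close>-th powers of rows 1 and 5.\<close>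

lemma row_ac: "a^2 * \<gamma> / \<omega> + (c^2 + c * (a + c * \<omega>^q) / \<omega>) = qf a c / \<omega>"
proof (rule omega_mult_eq_imp)
  have "\<omega> * (a^2 * \<gamma> / \<omega> + (c^2 + c * (a + c * \<omega>^q) / \<omega>))
      = a^2 * \<gamma> + (\<omega> * c^2 + c * (a + c * (1 + \<omega>)))"
    by (simp only: distrib_left omega_mult_divide omega_power_q)
  also have "\<dots> = qf a c"
    by (simp add: qf_def char2_ring_simps)
  finally show "\<omega> * (a^2 * \<gamma> / \<omega> + (c^2 + c * (a + c * \<omega>^q) / \<omega>)) = qf a c" .
qed

lemma row_ac_power_q:
  "a^(2*q) * \<gamma>^q / \<omega>^q + (c^(2*q) + c^q * (a^q + c^q * \<omega>) / \<omega>^q) = (qf a c / \<omega>)^q"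
proof -
  have "(a^2 * \<gamma> / \<omega> + (c^2 + c * (a + c * \<omega>^q) / \<omega>))^q
      = a^(2*q) * \<gamma>^q / \<omega>^q + (c^(2*q) + c^q * (a^q + c^q * \<omega>) / \<omega>^q)"
    by (simp add: power_q_add power_mult_distrib power_divide power_q_power_q power_mult)
  then show ?thesis
    using row_ac by simp
qed

lemma row_bd: "b^2 * \<gamma> / \<omega> + (d^2 + (d * (b + d * \<omega>^q) + \<omega>^q) / \<omega>) = (qf b d + \<omega>^q) / \<omega>"
proof (rule omega_mult_eq_imp)
  have "\<omega> * (b^2 * \<gamma> / \<omega> + (d^2 + (d * (b + d * \<omega>^q) + \<omega>^q) / \<omega>))
      = b^2 * \<gamma> + (\<omega> * d^2 + (d * (b + d * (1 + \<omega>)) + (1 + \<omega>)))"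
    by (simp only: distrib_left omega_mult_divide omega_power_q)
  also have "\<dots> = qf b d + \<omega>^q"
    by (simp add: qf_def omega_power_q char2_ring_simps)
  finally show "\<omega> * (b^2 * \<gamma> / \<omega> + (d^2 + (d * (b + d * \<omega>^q) + \<omega>^q) / \<omega>)) = qf b d + \<omega>^q" .
qed

lemma row_bd_power_q:
  "b^(2*q) * \<gamma>^q / \<omega>^q + (d^(2*q) + (d^q * (b^q + d^q * \<omega>) + \<omega>) / \<omega>^q)
     = ((qf b d + \<omega>^q) / \<omega>)^q"
proof -
  have "(b^2 * \<gamma> / \<omega> + (d^2 + (d * (b + d * \<omega>^q) + \<omega>^q) / \<omega>))^q
      = b^(2*q) * \<gamma>^q / \<omega>^q + (d^(2*q) + (d^q * (b^q + d^q * \<omega>) + \<omega>) / \<omega>^q)"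
    by (simp add: power_q_add power_mult_distrib power_divide power_q_power_q power_mult)
  then show ?thesis
    using row_bd by simp
qed

lemma mixed_term_div_omega:
  "a * b * \<gamma> / \<omega> + c * d + d * (a + c * \<omega>^q) / \<omega> = mixed_term (a, b, c, d) / \<omega>"
proof (rule omega_mult_eq_imp)
  have "\<omega> * (a * b * \<gamma> / \<omega> + c * d + d * (a + c * \<omega>^q) / \<omega>)
      = a * b * \<gamma> + \<omega> * (c * d) + d * (a + c * (1 + \<omega>))"
    by (simp only: distrib_left omega_mult_divide omega_power_q)
  also have "\<dots> = mixed_term (a, b, c, d)"
    by (simp add: mixed_term_def char2_ring_simps)
  finally show "\<omega> * (a * b * \<gamma> / \<omega> + c * d + d * (a + c * \<omega>^q) / \<omega>) = mixed_term (a, b, c, d)" .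
qed

lemma row_mixed:
  "a * b * \<gamma> / \<omega> + (a^q * b^q * \<gamma>^q / \<omega>^q + (s_vec ! 2 + (c^q * d^q + (c * d
     + (d * (a + c * \<omega>^q) / \<omega> + d^q * (a^q + c^q * \<omega>) / \<omega>^q + 1 / (\<omega> * \<omega>^q))))))
   = trace_q (mixed_term (a, b, c, d) / \<omega>) + s_vec ! 2 + 1 / (\<omega> * (1 + \<omega>))"
proof -
  have "(a * b * \<gamma> / \<omega> + c * d + d * (a + c * \<omega>^q) / \<omega>)^q
      = a^q * b^q * \<gamma>^q / \<omega>^q + c^q * d^q + d^q * (a^q + c^q * \<omega>) / \<omega>^q"
    by (simp add: power_q_add power_mult_distrib power_divide power_q_power_q)
  then show ?thesis
    unfolding trace_q_def mixed_term_div_omega[symmetric] by (simp add: omega_power_q add_ac)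
qed

lemma Mabcd_s_vec: "matvec (Mabcd q \<omega> a b c d) s_vec = orbit_vec (orbit_coords (a, b, c, d))"
proof -
  have "matvec (Mabcd q \<omega> a b c d) s_vec =
    [a^2 * \<gamma> / \<omega> + (c^2 + c * (a + c * \<omega>^q) / \<omega>),
     a^(2*q) * \<gamma>^q / \<omega>^q + (c^(2*q) + c^q * (a^q + c^q * \<omega>) / \<omega>^q),
     a * b * \<gamma> / \<omega> + (a^q * b^q * \<gamma>^q / \<omega>^q + (s_vec ! 2 + (c^q * d^q + (c * d
       + (d * (a + c * \<omega>^q) / \<omega> + d^q * (a^q + c^q * \<omega>) / \<omega>^q + 1 / (\<omega> * \<omega>^q)))))),
     b^(2*q) * \<gamma>^q / \<omega>^q + (d^(2*q) + (d^q * (b^q + d^q * \<omega>) + \<omega>) / \<omega>^q),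
     b^2 * \<gamma> / \<omega> + (d^2 + (d * (b + d * \<omega>^q) + \<omega>^q) / \<omega>), 1]"
    by (simp add: matvec_def Mabcd_def s_vec_def)
  also have "\<dots> = orbit_vec (orbit_coords (a, b, c, d))"
    unfolding row_ac row_ac_power_q row_mixed row_bd row_bd_power_q by (simp add: orbit_coords_def)
  finally show ?thesis .
qed

lemma orbit_vec_one: "orbit_vec (orbit_coords (1, 0, 0, 1)) = s_vec"
proof -
  have "(1 + \<omega>^q) / \<omega> = 1"
    using omega_nonzero by (simp add: omega_power_q char2_ring_simps add_self)
  then show ?thesis
    using trace_q_inverse_omega
    by (simp add: s_vec_def orbit_coords_def mixed_term_def qf_def power_divide add_self
        two_eq_zero_CHAR_2[OF CHAR_eq_2] flip: add.assoc)
qed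

section \<open>The solid \<open>\<Pi> \<inter> S\<^sub>\<gamma>\<^sup>\<perp>\<close> and its elliptic quadric\<close>

lemma trace_q_power_q: "(trace_q x)^q = trace_q x"
  by (simp add: trace_q_def power_q_add power_q_power_q add.commute)

lemma trace_q_power2_power_q: "((trace_q x)^2)^q = (trace_q x)^2"
  by (simp add: power_mult_distrib power2_eq_square trace_q_power_q)

lemma no_root_trace_gamma:
  assumes "t \<in> subF q"
  shows "t^2 + t + (trace_q \<gamma>)^2 \<noteq> 0"
proof
  assume root: "t^2 + t + (trace_q \<gamma>)^2 = 0"
  let ?y = "abs_trace k \<gamma>"
  let ?r = "t + trace_q \<gamma>"
  have "?y^2 + ?y = \<gamma> ^ 2^k + \<gamma>"
    by (rule power2_add_abs_trace_CHAR_2[OF CHAR_eq_2])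
  then have y: "?y^2 + ?y = trace_q \<gamma>"
    by (simp add: trace_q_def add.commute flip: q_eq)
  have "?r^2 + ?r = (t^2 + t + (trace_q \<gamma>)^2) + trace_q \<gamma>"
    by (simp add: power2_add add_ac)
  then have r: "?r^2 + ?r = trace_q \<gamma>"
    using root by simp
  have "?y = ?r \<or> ?y = ?r + 1"
    using artin_schreier_eq_iff_CHAR_2[OF CHAR_eq_2, of ?y ?r] y r by argo
  moreover have "?r^q = ?r"
    using assms trace_q_power_q by (simp add: power_q_add subF_iff)
  ultimately have "?y^q = ?y"
    by (auto simp: power_q_add)
  text \<open>The absolute trace of \<open>GF(q\<^sup>2)\<close> is that of \<open>GF(q)\<close> composed with the relative
    trace.\<close>
  moreover have "abs_trace (2 * k) \<gamma> = ?y + ?y^q"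
  proof -
    have "abs_trace k (\<gamma>^q) = ?y^q"
      by (simp add: abs_trace_def power_q_sum mult.commute flip: power_mult)
    then show ?thesis
      using abs_trace_add[of k k \<gamma>] by (simp add: mult_2 flip: q_eq)
  qed
  ultimately have "abs_trace (2 * k) \<gamma> = 0"
    by (simp add: add_self)
  then obtain s where "s^2 + s = \<gamma>"
    using abs_trace_eq_0_iff[OF card_field_2_power] k_pos by auto
  then show False
    using gamma_no_root[of s] by (simp add: add_self add.assoc)
qed

definition perp_vec :: "'a \<Rightarrow> 'a \<Rightarrow> 'a list" where
  "perp_vec \<alpha> \<beta> = [\<alpha>, \<alpha>^q, trace_q \<alpha> + trace_q (\<gamma> * \<beta>^q), \<beta>, \<beta>^q, 0]"

definition solid_frame :: "nat \<Rightarrow> 'a list" where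
  "solid_frame j = perp_vec ([1, (trace_q (\<gamma> * \<omega>^q))^2, \<omega>, 0] ! j) ([0, \<omega>, 0, 1] ! j)"

definition frame_alpha :: "(nat \<Rightarrow> 'a) \<Rightarrow> 'a" where
  "frame_alpha l = l 0 + l 1 * (trace_q (\<gamma> * \<omega>^q))^2 + l 2 * \<omega>"

definition frame_beta :: "(nat \<Rightarrow> 'a) \<Rightarrow> 'a" where
  "frame_beta l = l 3 + l 1 * \<omega>"

lemma length_perp_vec: "length (perp_vec \<alpha> \<beta>) = 6"
  by (simp add: perp_vec_def)

lemma sigvec_perp_vec: "sigvec q (perp_vec \<alpha> \<beta>)"
  unfolding sigvec_def perp_vec_def
  by (rule exI[of _ \<alpha>], rule exI[of _ \<beta>], rule exI[of _ "trace_q (\<alpha> + \<gamma> * \<beta>^q)"], rule exI[of _ 0])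
    (simp add: subF_iff trace_q_power_q flip: trace_q_add)

lemma perp_vec_eq_0_iff: "perp_vec \<alpha> \<beta> = replicate 6 0 \<longleftrightarrow> \<alpha> = 0 \<and> \<beta> = 0"
proof
  show "\<alpha> = 0 \<and> \<beta> = 0 \<Longrightarrow> perp_vec \<alpha> \<beta> = replicate 6 0"
    by (simp add: perp_vec_def trace_q_def numeral_eq_Suc)
qed (auto simp: perp_vec_def numeral_eq_Suc)

lemma comb4_solid_frame:
  assumes l: "\<forall>j<4. l j \<in> subF q"
  shows "comb4 l solid_frame = perp_vec (frame_alpha l) (frame_beta l)"
proof -
  have lq: "l 0 ^ q = l 0" "l 1 ^ q = l 1" "l 2 ^ q = l 2" "l 3 ^ q = l 3"
    "l (Suc 0) ^ q = l (Suc 0)"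
    using l by (auto simp: subF_iff)
  have "(\<Sum>j<4. f j) = f 0 + f 1 + f 2 + f 3" for f :: "nat \<Rightarrow> 'a"
    by (simp add: eval_nat_numeral add_ac)
  moreover have "[0..<6] = [0, 1, 2, 3, 4, 5]"
    by (simp add: upt_rec)
  ultimately show ?thesis
    unfolding comb4_def
    by (simp add: solid_frame_def perp_vec_def frame_alpha_def frame_beta_def trace_q_def
        power_q_add power_mult_distrib trace_q_power_q lq char2_ring_simps)
qed

lemma subF_omega_independent:
  assumes "x \<in> subF q" "y \<in> subF q" "x + y * \<omega> = 0"
  shows "x = 0 \<and> y = 0"
proof -
  have "(x + y * \<omega>)^q = x + y * (1 + \<omega>)"
    using assms(1,2) by (simp add: subF_iff power_q_add power_mult_distrib omega_power_q)
  then have "x + y * (1 + \<omega>) = 0"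
    using assms(3) by simp
  moreover have "y = (x + y * (1 + \<omega>)) + (x + y * \<omega>)"
    by (simp add: char2_ring_simps)
  ultimately show ?thesis
    using assms(3) by simp
qed

lemma frame_coords_eq_0:
  assumes l: "\<forall>j<4. l j \<in> subF q" and "frame_alpha l = 0" "frame_beta l = 0"
  shows "\<forall>j<4. l j = 0"
proof -
  have "l 3 = 0 \<and> l 1 = 0"
    using subF_omega_independent[of "l 3" "l 1"] l assms(3) by (simp add: frame_beta_def)
  moreover from this have "l 0 = 0 \<and> l 2 = 0"
    using subF_omega_independent[of "l 0" "l 2"] l assms(2) by (simp add: frame_alpha_def)
  ultimately show ?thesis
    by (auto simp: less_Suc_eq numeral_eq_Suc)
qed

lemma frame_coords_exist: "\<exists>l. (\<forall>j<4. l j \<in> subF q) \<and> frame_alpha l = \<alpha> \<and> frame_beta l = \<beta>"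
proof -
  define l1 where "l1 = trace_q \<beta>"
  define l2 where "l2 = trace_q \<alpha>"
  define l3 where "l3 = \<beta> + l1 * \<omega>"
  define l0 where "l0 = \<alpha> + l1 * (trace_q (\<gamma> * \<omega>^q))^2 + l2 * \<omega>"
  define l where
    "l = (\<lambda>j::nat. if j = 0 then l0 else if j = 1 then l1 else if j = 2 then l2 else l3)"
  have q1: "l1^q = l1" and q2: "l2^q = l2"
    by (simp_all add: l1_def l2_def trace_q_power_q)
  have q3: "l3^q = l3"
    by (simp add: l3_def q1 power_q_add power_mult_distrib omega_power_q)
      (simp add: l1_def trace_q_def char2_ring_simps)
  have q0: "l0^q = l0"
    by (simp add: l0_def q1 q2 power_q_add power_mult_distrib omega_power_q trace_q_power2_power_q)
      (simp add: l2_def trace_q_def char2_ring_simps)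
  have "\<forall>j<4. l j \<in> subF q"
    using q0 q1 q2 q3 by (auto simp: l_def subF_iff)
  moreover have "frame_alpha l = \<alpha>" "frame_beta l = \<beta>"
    by (simp_all add: frame_alpha_def frame_beta_def l_def l0_def l3_def char2_ring_simps)
  ultimately show ?thesis
    by blast
qed

lemma quad_form_frame:
  assumes l: "\<forall>j<4. l j \<in> subF q"
  shows "quad_form (perp_vec (frame_alpha l) (frame_beta l))
           = l 0 * l 1 + (l 2)^2 + l 2 * l 3 + (trace_q \<gamma>)^2 * (l 3)^2"
proof -
  let ?a = "frame_alpha l" and ?b = "frame_beta l" and ?h = "trace_q (\<gamma> * \<omega>^q)"
  have lq: "l 0 ^ q = l 0" "l 1 ^ q = l 1" "l 2 ^ q = l 2" "l 3 ^ q = l 3"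
    "l (Suc 0) ^ q = l (Suc 0)"
    using l by (auto simp: subF_iff)
  have aq: "?a^q = l 0 + l 1 * ?h^2 + l 2 * (1 + \<omega>)"
    by (simp add: frame_alpha_def power_q_add power_mult_distrib lq trace_q_power2_power_q
        omega_power_q)
  have bq: "?b^q = l 3 + l 1 * (1 + \<omega>)"
    by (simp add: frame_beta_def power_q_add power_mult_distrib lq omega_power_q)
  have third: "trace_q ?a + trace_q (\<gamma> * ?b^q) = l 2 + trace_q \<gamma> * l 3 + ?h * l 1"
    unfolding trace_q_def[of ?a] aq
    by (simp add: trace_q_def power_q_add power_mult_distrib bq lq power_q_power_q omega_power_q
        frame_alpha_def frame_beta_def char2_ring_simps)
  have "quad_form (perp_vec ?a ?b) = (l 2 + trace_q \<gamma> * l 3 + ?h * l 1)^2 + ?a * ?b^q + ?a^q * ?b"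
    by (simp add: quad_form_def perp_vec_def third)
  also have "\<dots> = l 0 * l 1 + (l 2)^2 + l 2 * l 3 + (trace_q \<gamma>)^2 * (l 3)^2"
    unfolding aq bq
    by (simp add: frame_alpha_def frame_beta_def trace_q_def power_q_add power_mult_distrib
        power_q_power_q omega_power_q char2_ring_simps)
  finally show ?thesis .
qed

lemma hform_s_vec:
  "hform q \<omega> s_vec [\<alpha>, \<alpha>', \<delta>, \<beta>, \<beta>', 0]
     = \<gamma> * \<beta>^q + \<gamma>^q * \<beta>'^q + (\<omega> + \<omega>^q) * (\<alpha>'^q + \<alpha>^q) + \<delta>^q"
  unfolding hform_def s_vec_def using omega_nonzero one_add_omega_nonzero
  by (simp add: power_divide omega_power_q field_simps char2_ring_simps)

lemma hform_s_vec_perp_vec: "hform q \<omega> s_vec (perp_vec \<alpha> \<beta>) = 0"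
  unfolding perp_vec_def hform_s_vec
  by (simp add: omega_add_power_q trace_q_def power_q_add power_mult_distrib power_q_power_q
      char2_ring_simps)

lemma perp_vec_in_solid:
  assumes "\<not> (\<alpha> = 0 \<and> \<beta> = 0)"
  shows "ptof (perp_vec \<alpha> \<beta>) \<in> Pi4 q \<inter> perp q \<omega> (Sgam q \<omega> \<gamma>)"
proof -
  have "ptof (perp_vec \<alpha> \<beta>) \<in> Sigma5 q"
    unfolding Sigma5_def using sigvec_perp_vec perp_vec_eq_0_iff assms by blast
  moreover have "\<forall>v\<in>ptof (perp_vec \<alpha> \<beta>). v ! 5 = 0"
    by (auto simp: mem_ptof length_perp_vec) (simp add: perp_vec_def)
  moreover have "hform q \<omega> x y = 0" if x: "x \<in> Sgam q \<omega> \<gamma>" and y: "y \<in> ptof (perp_vec \<alpha> \<beta>)"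
    for x y
  proof -
    obtain c c' where "x = map ((*) c) s_vec" "y = map ((*) c') (perp_vec \<alpha> \<beta>)"
      using x y by (auto simp: Sgam_eq mem_ptof)
    then show ?thesis
      by (simp add: hform_scale length_s_vec length_perp_vec hform_s_vec_perp_vec)
  qed
  ultimately show ?thesis
    by (simp add: Pi4_def perp_def)
qed

lemma solid_point_eq_perp_vec:
  assumes P: "P \<in> Pi4 q \<inter> perp q \<omega> (Sgam q \<omega> \<gamma>)"
  obtains \<alpha> \<beta> where "\<not> (\<alpha> = 0 \<and> \<beta> = 0)" and "P = ptof (perp_vec \<alpha> \<beta>)"
proof -
  obtain v where v: "P = ptof v" "sigvec q v" "v \<noteq> replicate 6 0"
    using P by (auto simp: Pi4_def Sigma5_def)
  then obtain \<alpha> \<beta> \<delta>0 \<delta>1 where \<delta>0: "\<delta>0 \<in> subF q" and v_eq: "v = [\<alpha>, \<alpha>^q, \<delta>0, \<beta>, \<beta>^q, \<delta>1]"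
    by (auto simp: sigvec_def)
  have "\<delta>1 = 0"
    using P v(1) mem_ptof_self[of v] by (auto simp: Pi4_def v_eq)
  moreover have "hform q \<omega> s_vec v = 0"
    using P v(1) mem_ptof_self[of v] mem_ptof_self[of s_vec] by (auto simp: perp_def Sgam_eq)
  ultimately have "trace_q \<alpha> + trace_q (\<gamma> * \<beta>^q) + \<delta>0 = 0"
    using \<delta>0 hform_s_vec[of \<alpha> "\<alpha>^q" \<delta>0 \<beta> "\<beta>^q"]
    by (simp add: v_eq omega_add_power_q power_q_power_q subF_iff trace_q_def power_q_add
        power_mult_distrib add_ac)
  then have "v = perp_vec \<alpha> \<beta>"
    using \<open>\<delta>1 = 0\<close> by (simp add: v_eq perp_vec_def add_eq_0_iff)
  then show ?thesis
    using that v perp_vec_eq_0_iff by blast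
qed

lemma solid_eq:
  "Pi4 q \<inter> perp q \<omega> (Sgam q \<omega> \<gamma>)
     = {ptof (comb4 l solid_frame) | l. (\<forall>j<4. l j \<in> subF q) \<and> (\<exists>j<4. l j \<noteq> 0)}"
proof (intro Set.set_eqI iffI)
  fix P assume "P \<in> {ptof (comb4 l solid_frame) | l. (\<forall>j<4. l j \<in> subF q) \<and> (\<exists>j<4. l j \<noteq> 0)}"
  then obtain l where l: "\<forall>j<4. l j \<in> subF q" "\<exists>j<4. l j \<noteq> 0"
    and P: "P = ptof (comb4 l solid_frame)"
    by auto
  have "\<not> (frame_alpha l = 0 \<and> frame_beta l = 0)"
    using frame_coords_eq_0[OF l(1)] l(2) by blast
  then show "P \<in> Pi4 q \<inter> perp q \<omega> (Sgam q \<omega> \<gamma>)"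
    using perp_vec_in_solid P comb4_solid_frame[OF l(1)] by simp
next
  fix P assume "P \<in> Pi4 q \<inter> perp q \<omega> (Sgam q \<omega> \<gamma>)"
  then obtain \<alpha> \<beta> where nz: "\<not> (\<alpha> = 0 \<and> \<beta> = 0)" and P: "P = ptof (perp_vec \<alpha> \<beta>)"
    by (rule solid_point_eq_perp_vec)
  obtain l where l: "\<forall>j<4. l j \<in> subF q" "frame_alpha l = \<alpha>" "frame_beta l = \<beta>"
    using frame_coords_exist by blast
  have "\<exists>j<4. l j \<noteq> 0"
  proof (rule ccontr)
    assume "\<not> (\<exists>j<4. l j \<noteq> 0)"
    then have "frame_alpha l = 0" "frame_beta l = 0"
      by (auto simp: frame_alpha_def frame_beta_def)
    then show False
      using l nz by simp
  qed
  moreover have "P = ptof (comb4 l solid_frame)"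
    using l P comb4_solid_frame[OF l(1)] by simp
  ultimately show "P \<in> {ptof (comb4 l solid_frame) | l. (\<forall>j<4. l j \<in> subF q) \<and> (\<exists>j<4. l j \<noteq> 0)}"
    using l(1) by blast
qed

lemma quadric_eq:
  "Pi4 q \<inter> perp q \<omega> (Sgam q \<omega> \<gamma>) \<inter> Quad q
     = {ptof (comb4 l solid_frame) | l. (\<forall>j<4. l j \<in> subF q) \<and> (\<exists>j<4. l j \<noteq> 0) \<and>
          l 0 * l 1 + (l 2)^2 + l 2 * l 3 + (trace_q \<gamma>)^2 * (l 3)^2 = 0}"
    (is "_ = {ptof (comb4 l solid_frame) | l. _ \<and> _ \<and> ?eqn l}")
proof -
  have quad_form_iff: "quad_form v = 0 \<longleftrightarrow> ?eqn l"
    if l: "\<forall>j<4. l j \<in> subF q" and v: "v \<in> ptof (comb4 l solid_frame)" for l v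
  proof -
    obtain c where "c \<noteq> 0" "v = map ((*) c) (perp_vec (frame_alpha l) (frame_beta l))"
      using v comb4_solid_frame[OF l] by (auto simp: mem_ptof)
    then show ?thesis
      by (simp add: quad_form_scale length_perp_vec quad_form_frame[OF l])
  qed
  show ?thesis
  proof (intro Set.set_eqI iffI)
    fix P assume P: "P \<in> Pi4 q \<inter> perp q \<omega> (Sgam q \<omega> \<gamma>) \<inter> Quad q"
    then obtain l where l: "\<forall>j<4. l j \<in> subF q" "\<exists>j<4. l j \<noteq> 0"
      and P_eq: "P = ptof (comb4 l solid_frame)"
      unfolding solid_eq by blast
    then have "?eqn l"
      using P quad_form_iff[OF l(1) mem_ptof_self] by (simp add: mem_Quad_iff mem_ptof_self)
    then show "P \<in> {ptof (comb4 l solid_frame) | l.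
        (\<forall>j<4. l j \<in> subF q) \<and> (\<exists>j<4. l j \<noteq> 0) \<and> ?eqn l}"
      using l P_eq by blast
  next
    fix P assume "P \<in> {ptof (comb4 l solid_frame) | l.
        (\<forall>j<4. l j \<in> subF q) \<and> (\<exists>j<4. l j \<noteq> 0) \<and> ?eqn l}"
    then obtain l where l: "\<forall>j<4. l j \<in> subF q" "\<exists>j<4. l j \<noteq> 0" "?eqn l"
      and P_eq: "P = ptof (comb4 l solid_frame)"
      by blast
    then have "P \<in> Pi4 q \<inter> perp q \<omega> (Sgam q \<omega> \<gamma>)"
      unfolding solid_eq by blast
    moreover have "\<forall>v\<in>P. quad_form v = 0"
      using quad_form_iff[OF l(1)] l(3) P_eq by blast
    ultimately show "P \<in> Pi4 q \<inter> perp q \<omega> (Sgam q \<omega> \<gamma>) \<inter> Quad q"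
      by (simp add: mem_Quad_iff)
  qed
qed

lemma frame4_solid_frame: "frame4 q solid_frame"
proof -
  have "frame_alpha l = 0 \<and> frame_beta l = 0"
    if "\<forall>j<4. l j \<in> subF q" "comb4 l solid_frame = replicate 6 0" for l
    using comb4_solid_frame[OF that(1)] that(2) perp_vec_eq_0_iff by metis
  then show ?thesis
    using frame_coords_eq_0 by (auto simp: frame4_def solid_frame_def sigvec_perp_vec)
qed

lemma solid_and_elliptic_quadric:
  "solid_of_Sigma q (Pi4 q \<inter> perp q \<omega> (Sgam q \<omega> \<gamma>))
   \<and> elliptic_quadric_of q (Pi4 q \<inter> perp q \<omega> (Sgam q \<omega> \<gamma>))
       (Pi4 q \<inter> perp q \<omega> (Sgam q \<omega> \<gamma>) \<inter> Quad q)"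
proof
  show "solid_of_Sigma q (Pi4 q \<inter> perp q \<omega> (Sgam q \<omega> \<gamma>))"
    unfolding solid_of_Sigma_def solid_eq
    by (intro exI[of _ solid_frame] conjI frame4_solid_frame refl)
  have "(trace_q \<gamma>)^2 \<in> subF q"
    by (simp add: subF_iff trace_q_power2_power_q)
  then show "elliptic_quadric_of q (Pi4 q \<inter> perp q \<omega> (Sgam q \<omega> \<gamma>))
      (Pi4 q \<inter> perp q \<omega> (Sgam q \<omega> \<gamma>) \<inter> Quad q)"
    unfolding elliptic_quadric_of_def quadric_eq unfolding solid_eq
    by (intro exI[of _ solid_frame] exI[of _ "(trace_q \<gamma>)^2"] conjI frame4_solid_frame ballI
        no_root_trace_gamma refl)
qed

section \<open>Stabiliser and orbit of \<open>S\<^sub>\<gamma>\<close>\<close>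

definition proj_of :: "'a mat2 \<Rightarrow> 'a list set \<Rightarrow> 'a list set" where
  "proj_of A = (case A of (a, b, c, d) \<Rightarrow> projmap (Mabcd q \<omega> a b c d))"

lemma Ggrp_eq: "Ggrp q \<omega> = proj_of ` SL2"
  by (force simp: Ggrp_def SL2_def proj_of_def image_def char2_simps)

lemma proj_of_ptof:
  "length e = 6 \<Longrightarrow> e ! 5 = 1 \<Longrightarrow> proj_of (a, b, c, d) (ptof e) = ptof (matvec (Mabcd q \<omega> a b c d) e)"
  by (simp add: proj_of_def projmap_ptof ptof_in_PG5)

lemma proj_of_Sgam: "proj_of A (Sgam q \<omega> \<gamma>) = ptof (orbit_vec (orbit_coords A))"
proof (cases A)
  case (fields a b c d)
  have "proj_of (a, b, c, d) (ptof s_vec) = ptof (matvec (Mabcd q \<omega> a b c d) s_vec)"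
    by (rule proj_of_ptof) (simp_all add: s_vec_def)
  then show ?thesis
    by (simp add: fields Sgam_eq Mabcd_s_vec)
qed

lemma Sgam_eq_orbit_vec: "Sgam q \<omega> \<gamma> = ptof (orbit_vec (orbit_coords (1, 0, 0, 1)))"
  by (simp add: Sgam_eq orbit_vec_one)

lemma ptof_orbit_vec_eq_iff: "ptof (orbit_vec x) = ptof (orbit_vec y) \<longleftrightarrow> x = y"
  using ptof_eq_imp_eq[of "orbit_vec x" "orbit_vec y" 5] inj_orbit_vec
  by (auto simp: length_orbit_vec orbit_vec_last inj_eq)

lemma proj_of_Sgam_eq_iff:
  "proj_of A (Sgam q \<omega> \<gamma>) = proj_of B (Sgam q \<omega> \<gamma>) \<longleftrightarrow> orbit_coords A = orbit_coords B"
  by (simp add: proj_of_Sgam ptof_orbit_vec_eq_iff)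

lemma Mabcd_column_entries:
  "matvec (Mabcd q \<omega> a b c d) [1, 0, 0, 0, 0, 1] ! 0
     = a^2 + matvec (Mabcd q \<omega> a b c d) [0, 0, 0, 0, 0, 1] ! 0"
  "matvec (Mabcd q \<omega> a b c d) [1, 0, 0, 0, 0, 1] ! 4
     = b^2 + matvec (Mabcd q \<omega> a b c d) [0, 0, 0, 0, 0, 1] ! 4"
  "matvec (Mabcd q \<omega> a b c d) [0, 0, 0, 0, 1, 1] ! 0
     = c^2 + matvec (Mabcd q \<omega> a b c d) [0, 0, 0, 0, 0, 1] ! 0"
  "matvec (Mabcd q \<omega> a b c d) [0, 0, 0, 0, 1, 1] ! 4
     = d^2 + matvec (Mabcd q \<omega> a b c d) [0, 0, 0, 0, 0, 1] ! 4"
  by (simp_all add: matvec_def Mabcd_def)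

text \<open>\<open>G\<close> acts faithfully: the images of three points of \<open>\<Sigma>\<close> determine \<open>a\<^sup>2, b\<^sup>2, c\<^sup>2, d\<^sup>2\<close>,
  and squaring is injective in characteristic \<open>2\<close>.\<close>

lemma inj_on_proj_of: "inj_on proj_of SL2"
proof (rule inj_onI)
  fix A B assume "A \<in> SL2" "B \<in> SL2" and eq: "proj_of A = proj_of B"
  obtain a b c d where A: "A = (a, b, c, d)"
    by (cases A)
  obtain a' b' c' d' where B: "B = (a', b', c', d')"
    by (cases B)
  have col: "matvec (Mabcd q \<omega> a b c d) e = matvec (Mabcd q \<omega> a' b' c' d') e"
    if "e \<in> {[0, 0, 0, 0, 0, 1], [1, 0, 0, 0, 0, 1], [0, 0, 0, 0, 1, 1]}" for e
  proof (rule ptof_eq_imp_eq[where i = 5])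
    have "length e = 6" "e ! 5 = 1"
      using that by auto
    then show "ptof (matvec (Mabcd q \<omega> a b c d) e) = ptof (matvec (Mabcd q \<omega> a' b' c' d') e)"
      using eq by (simp add: A B flip: proj_of_ptof)
  qed (use that in \<open>auto simp: matvec_def Mabcd_def\<close>)
  have "a^2 = a'^2" "b^2 = b'^2" "c^2 = c'^2" "d^2 = d'^2"
    using col[of "[0, 0, 0, 0, 0, 1]"] col[of "[1, 0, 0, 0, 0, 1]"] col[of "[0, 0, 0, 0, 1, 1]"]
      Mabcd_column_entries[of a b c d] Mabcd_column_entries[of a' b' c' d']
    by simp_all
  then show "A = B"
    by (simp add: A B power2_eq_iff)
qed

lemma stabiliser_eq_torus: "{A\<in>SL2. proj_of A (Sgam q \<omega> \<gamma>) = Sgam q \<omega> \<gamma>} = stab_torus"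
proof (intro Set.set_eqI iffI)
  fix A assume "A \<in> {A\<in>SL2. proj_of A (Sgam q \<omega> \<gamma>) = Sgam q \<omega> \<gamma>}"
  then have "A \<in> SL2" and "proj_of A (Sgam q \<omega> \<gamma>) = proj_of (1, 0, 0, 1) (Sgam q \<omega> \<gamma>)"
    by (simp_all add: proj_of_Sgam flip: Sgam_eq_orbit_vec)
  then have "A \<in> SL2" and "orbit_coords A = orbit_coords (1, 0, 0, 1)"
    by (simp_all only: proj_of_Sgam_eq_iff)
  then show "A \<in> stab_torus"
    using orbit_coords_eq_imp_torus[OF one_in_SL2] by fastforce
next
  fix R assume "R \<in> stab_torus"
  then show "R \<in> {A\<in>SL2. proj_of A (Sgam q \<omega> \<gamma>) = Sgam q \<omega> \<gamma>}"
    using orbit_coords_torus_mult[OF one_in_SL2]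
    by (simp add: proj_of_Sgam flip: Sgam_eq_orbit_vec)
qed

lemma card_stabiliser: "card {g \<in> Ggrp q \<omega>. g (Sgam q \<omega> \<gamma>) = Sgam q \<omega> \<gamma>} = q^2 + 1"
proof -
  have "{g \<in> Ggrp q \<omega>. g (Sgam q \<omega> \<gamma>) = Sgam q \<omega> \<gamma>}
      = proj_of ` {A\<in>SL2. proj_of A (Sgam q \<omega> \<gamma>) = Sgam q \<omega> \<gamma>}"
    by (auto simp: Ggrp_eq)
  moreover have "inj_on proj_of {A\<in>SL2. proj_of A (Sgam q \<omega> \<gamma>) = Sgam q \<omega> \<gamma>}"
    using inj_on_proj_of by (rule inj_on_subset) auto
  ultimately show ?thesis
    by (simp add: card_image stabiliser_eq_torus card_stab_torus)
qed

lemma card_orbit: "card {g (Sgam q \<omega> \<gamma>) | g. g \<in> Ggrp q \<omega>} = q^2 * (q^2 - 1)"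
proof -
  have "{g (Sgam q \<omega> \<gamma>) | g. g \<in> Ggrp q \<omega>} = (\<lambda>A. proj_of A (Sgam q \<omega> \<gamma>)) ` SL2"
    by (auto simp: Ggrp_eq)
  also have "\<dots> = (\<lambda>x. ptof (orbit_vec x)) ` orbit_coords ` SL2"
    by (simp add: image_image proj_of_Sgam)
  moreover have "inj_on (\<lambda>x. ptof (orbit_vec x)) (orbit_coords ` SL2)"
    by (rule inj_onI) (simp add: ptof_orbit_vec_eq_iff)
  ultimately show ?thesis
    by (simp add: card_image card_orbit_coords)
qed

end

theorem mainTheorem11:
  fixes q :: nat and \<omega> \<gamma> :: "'a::{field,finite}"
  assumes "\<exists>p k. prime p \<and> 0 < k \<and> q = p ^ k" and "even q"
    and "card (UNIV :: 'a set) = q^2"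
    and "\<omega> \<notin> subF q" and "\<omega> + \<omega>^q = 1"
    and "irreducible [:\<gamma>, 1, 1:]"
  shows "solid_of_Sigma q (Pi4 q \<inter> perp q \<omega> (Sgam q \<omega> \<gamma>))
    \<and> elliptic_quadric_of q (Pi4 q \<inter> perp q \<omega> (Sgam q \<omega> \<gamma>))
          (Pi4 q \<inter> perp q \<omega> (Sgam q \<omega> \<gamma>) \<inter> Quad q)
    \<and> card {g \<in> Ggrp q \<omega>. g (Sgam q \<omega> \<gamma>) = Sgam q \<omega> \<gamma>} = q^2 + 1
    \<and> card {g (Sgam q \<omega> \<gamma>) | g. g \<in> Ggrp q \<omega>} = q^2 * (q^2 - 1)"
proof -
  obtain p k where p: "prime p" and k: "0 < k" and q: "q = p ^ k"
    using assms(1) by blast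
  have "p = 2"
    using assms(2) p q k by (metis prime_dvd_power primes_dvd_imp_eq two_is_prime_nat)
  then interpret pg5_setting q k \<omega> \<gamma>
    using assms(3-6) k q by unfold_locales simp_all
  show ?thesis
    using solid_and_elliptic_quadric card_stabiliser card_orbit by blast
qed

end
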